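(* Let $n\ge 2$, let $P_n$ be the path with vertices $x_1,\dots,x_n$ and edges $\{x_i,x_{i+1}\}$, let $\mathcal C$ be a maximal independent set of $P_n$ with $c:=|\mathcal C|$, and let $G$ be the $\mathcal C$-suspension of $P_n$. Let $\alpha:=\lceil n/2\rceil$, $b_n:=(-1)^{\lceil n/2\rceil}P_{P_n}(-1)$, $\delta_0=0$ if $x_1\in\mathcal C$ and $1$ otherwise, $\delta_t=0$ if $x_n\in\mathcal C$ and $1$ otherwise, and $\delta:=\delta_0+\delta_t$. Then: (a) If $n\equiv 0,2\pmod 3$, then $\mathfrak a(G)=0$ and $h_{\alpha(G)}(G)=-b_n$ if $c+\delta=\alpha+1$, while $h_{\alpha(G)}(G)=b_n$ if $c+\delta\le\alpha$. (b) If $n=3k+1$ and $\mathcal C=\{x_1,x_4,\dots,x_{3k+1}\}$, then $\mathfrak a(G)=0$ and $h_{\alpha(G)}(G)=(-1)^{\alpha+k+1}$. (c) In all remaining cases, $\mathfrak a(G)<0$.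
   Context: For $\varnothing\ne C\subseteq V(G)$, the $C$-suspension of $G$ is obtained by adding a new vertex $z$ adjacent exactly to the vertices of $C$. The independence polynomial is $P_G(x)=\sum_i g_ix^i$, $g_i$ the number of independent sets of size $i$. For $G$ on vertex set $[N]$, let $S=K[y_1,\dots,y_N]$ ($K$ a field), $I(G)$ the edge ideal generated by $y_iy_j$ for edges $\{i,j\}$, $\alpha(G)$ the independence number (equal to $\dim S/I(G)$), and write the Hilbert series of $S/I(G)$ uniquely as $h_G(t)/(1-t)^{\alpha(G)}$ with $h_G(t)=\sum_i h_i(G)t^i$ a polynomial with nonzero leading coefficient ($h_i(G)=0$ for $i>\deg h_G$). The $\mathfrak a$-invariant is $\mathfrak a(G)=\deg h_G(t)-\alpha(G)$, and $h_{\alpha(G)}(G)$ is the coefficient of $t^{\alpha(G)}$ in $h_G(t)$. *)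

theory Defs
  imports "HOL-Library.Multiset" "HOL-Computational_Algebra.Polynomial_FPS"
begin

text \<open>Simple graphs: a finite vertex set V :: nat set and an edge set E of
  2-element subsets of V.\<close>

definition indep :: "nat set \<Rightarrow> nat set set \<Rightarrow> nat set \<Rightarrow> bool" where
  "indep V E S \<longleftrightarrow> S \<subseteq> V \<and> (\<forall>e\<in>E. \<not> e \<subseteq> S)"

definition maximal_indep :: "nat set \<Rightarrow> nat set set \<Rightarrow> nat set \<Rightarrow> bool" where
  "maximal_indep V E S \<longleftrightarrow> indep V E S \<and> (\<forall>v\<in>V - S. \<not> indep V E (insert v S))"

definition indep_num :: "nat set \<Rightarrow> nat set set \<Rightarrow> nat" where
  "indep_num V E = Max (card ` {S. indep V E S})"

definition indep_poly_eval :: "nat set \<Rightarrow> nat set set \<Rightarrow> int \<Rightarrow> int" where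
  "indep_poly_eval V E x = (\<Sum>S\<in>{S. indep V E S}. x ^ card S)"

definition pathV :: "nat \<Rightarrow> nat set" where
  "pathV n = {1..n}"

definition pathE :: "nat \<Rightarrow> nat set set" where
  "pathE n = {{i, Suc i} | i. 1 \<le> i \<and> i < n}"

definition suspV :: "nat set \<Rightarrow> nat \<Rightarrow> nat set" where
  "suspV V z = insert z V"

definition suspE :: "nat set set \<Rightarrow> nat set \<Rightarrow> nat \<Rightarrow> nat set set" where
  "suspE E C z = E \<union> {{z, c} | c. c \<in> C}"

text \<open>Hilbert function of S/I(G): the monomials y^m (m a multiset of vertices)
  of degree d that do not lie in the monomial ideal I(G), i.e. are divisible by
  no generator y_i y_j with {i,j} an edge. These standard monomials form a
  K-basis of the degree-d component of S/I(G), for any field K.\<close>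
definition standard_monomials :: "nat set \<Rightarrow> nat set set \<Rightarrow> nat \<Rightarrow> nat multiset set" where
  "standard_monomials V E d =
     {m. set_mset m \<subseteq> V \<and> size m = d \<and>
         \<not> (\<exists>e\<in>E. \<exists>i j. e = {i, j} \<and> i \<noteq> j \<and> i \<in># m \<and> j \<in># m)}"

definition hilbert_fun :: "nat set \<Rightarrow> nat set set \<Rightarrow> nat \<Rightarrow> nat" where
  "hilbert_fun V E d = card (standard_monomials V E d)"

definition hilbert_series :: "nat set \<Rightarrow> nat set set \<Rightarrow> int fps" where
  "hilbert_series V E = Abs_fps (\<lambda>d. int (hilbert_fun V E d))"

definition h_poly :: "nat set \<Rightarrow> nat set set \<Rightarrow> int poly" where
  "h_poly V E = (THE p. fps_of_poly p = hilbert_series V E * (1 - fps_X) ^ indep_num V E)"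

definition a_inv :: "nat set \<Rightarrow> nat set set \<Rightarrow> int" where
  "a_inv V E = int (degree (h_poly V E)) - int (indep_num V E)"

end

theory Submission
  imports Defs
begin

(* Counting standard monomials by their support, which must be an independent set S, gives
   H(t) = sum_S (t/(1-t))^|S|, so h_G(t) = sum_S t^|S| (1-t)^(alpha(G) - |S|). This has degree at most
   alpha(G) and its coefficient of t^alpha(G) is (-1)^alpha(G) P_G(-1); so (as alpha(G) > 0) a(G) = 0 iff
   P_G(-1) <> 0, and everything reduces to alpha(G) and P_G(-1).
   Splitting the independent sets of G by whether they contain z gives P_G = P_(P_n) + x P_(P_n - C) and
   alpha(G) = max(alpha(P_n), 1 + alpha(P_n - C)), where alpha(P_n - C) = |C - {x_1}| + delta_t.
   The values P_(P_n)(-1) satisfy f(n+2) = f(n+1) - f(n) and vanish iff n = 1 mod 3. An isolated vertex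
   makes P(-1) vanish; the only maximal independent set C of P_n whose complement has no isolated vertex
   is {x_1, x_4, ..., x_(3k+1)}, whose complement is k disjoint edges, with P(-1) = (-1)^k. *)

section \<open>Hilbert series of edge ideals\<close>

definition indep_sets :: "nat set \<Rightarrow> nat set set \<Rightarrow> nat set set" where
  "indep_sets V E = {S. indep V E S}"

definition two_element_edges :: "nat set set \<Rightarrow> bool" where
  "two_element_edges E \<longleftrightarrow> (\<forall>e\<in>E. \<exists>i j. e = {i, j} \<and> i \<noteq> j)"

lemma finite_indep_sets: "finite V \<Longrightarrow> finite (indep_sets V E)"
  by (rule finite_subset[of _ "Pow V"]) (auto simp: indep_sets_def indep_def)

lemma finite_indep: "finite V \<Longrightarrow> indep V E S \<Longrightarrow> finite S"
  by (auto simp: indep_def intro: finite_subset)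

lemma indep_empty: "two_element_edges E \<Longrightarrow> indep V E {}"
  by (fastforce simp: indep_def two_element_edges_def)

lemma card_le_indep_num: "finite V \<Longrightarrow> indep V E S \<Longrightarrow> card S \<le> indep_num V E"
  unfolding indep_num_def by (rule Max_ge) (use finite_indep_sets[of V E] in \<open>auto simp: indep_sets_def\<close>)

lemma indep_num_eqI:
  assumes "finite V" "\<And>S. indep V E S \<Longrightarrow> card S \<le> k" "indep V E S\<^sub>0" "card S\<^sub>0 = k"
  shows "indep_num V E = k"
  unfolding indep_num_def
  by (rule Max_eqI) (use assms finite_indep_sets[of V E] in \<open>auto simp: indep_sets_def\<close>)

lemma indep_num_attained:
  assumes "two_element_edges E" "finite V"
  obtains S where "indep V E S" "card S = indep_num V E"
proof -
  have "indep_num V E \<in> card ` indep_sets V E"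
    unfolding indep_num_def indep_sets_def[symmetric]
    using assms finite_indep_sets[of V E] indep_empty[of E V]
    by (intro Max_in) (auto simp: indep_sets_def)
  then show ?thesis using that by (auto simp: indep_sets_def)
qed

definition msets_with_support :: "'a set \<Rightarrow> nat \<Rightarrow> 'a multiset set" where
  "msets_with_support S d = {m. set_mset m = S \<and> size m = d}"

lemma finite_msets_with_support: "finite S \<Longrightarrow> finite (msets_with_support S d)"
  by (rule finite_subset[OF _ finite_multisets_of_size[of S d]])
     (auto simp: msets_with_support_def multisets_of_size_def)

lemma msets_with_support_insert_Suc:
  assumes "a \<notin> S"
  shows "msets_with_support (insert a S) (Suc d) =
           add_mset a ` (msets_with_support (insert a S) d \<union> msets_with_support S d)"
proof (intro equalityI subsetI)
  fix m assume m: "m \<in> msets_with_support (insert a S) (Suc d)"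
  define m' where "m' = m - {#a#}"
  have m_eq: "m = add_mset a m'"
    using m by (auto simp: msets_with_support_def m'_def)
  have "set_mset m = insert a S" "size m = Suc d"
    using m by (simp_all add: msets_with_support_def)
  then have "S \<subseteq> set_mset m'" "set_mset m' \<subseteq> insert a S" and size: "size m' = d"
    using assms unfolding m_eq by auto
  then have "set_mset m' = insert a S \<or> set_mset m' = S"
    using assms by blast
  with size have "m' \<in> msets_with_support (insert a S) d \<union> msets_with_support S d"
    by (auto simp: msets_with_support_def)
  then show "m \<in> add_mset a ` (msets_with_support (insert a S) d \<union> msets_with_support S d)"
    using m_eq by blast
next
  fix m assume "m \<in> add_mset a ` (msets_with_support (insert a S) d \<union> msets_with_support S d)"
  then obtain m' where "m = add_mset a m'" "set_mset m' = insert a S \<or> set_mset m' = S" "size m' = d"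
    by (auto simp: msets_with_support_def)
  then show "m \<in> msets_with_support (insert a S) (Suc d)"
    by (auto simp: msets_with_support_def)
qed

lemma card_msets_with_support_insert_Suc:
  assumes "finite S" "a \<notin> S"
  shows "card (msets_with_support (insert a S) (Suc d)) =
           card (msets_with_support (insert a S) d) + card (msets_with_support S d)"
proof -
  have "msets_with_support (insert a S) d \<inter> msets_with_support S d = {}"
    using assms(2) by (auto simp: msets_with_support_def)
  then show ?thesis
    unfolding msets_with_support_insert_Suc[OF assms(2)]
    by (subst card_image) (auto simp: inj_on_def card_Un_disjoint finite_msets_with_support assms(1))
qed

definition support_series :: "'a set \<Rightarrow> int fps" where
  "support_series S = Abs_fps (\<lambda>d. int (card (msets_with_support S d)))"

lemma support_series_insert:
  assumes "finite S" "a \<notin> S"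
  shows "(1 - fps_X) * support_series (insert a S) = fps_X * support_series S"
proof -
  have "support_series (insert a S) - fps_X * support_series (insert a S) = fps_X * support_series S"
  proof (rule fps_ext)
    fix d
    show "fps_nth (support_series (insert a S) - fps_X * support_series (insert a S)) d
        = fps_nth (fps_X * support_series S) d"
      using card_msets_with_support_insert_Suc[OF assms, of "d - 1"]
      by (cases d) (simp_all add: support_series_def msets_with_support_def)
  qed
  then show ?thesis by (simp add: left_diff_distrib)
qed

lemma support_series_mult_power: "finite S \<Longrightarrow> support_series S * (1 - fps_X) ^ card S = fps_X ^ card S"
proof (induction S rule: finite_induct)
  case empty
  have "support_series {} = 1"
    by (rule fps_ext) (simp add: support_series_def msets_with_support_def)
  then show ?case by simp
next
  case (insert a S)
  have "support_series (insert a S) * (1 - fps_X) ^ card (insert a S)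
      = ((1 - fps_X) * support_series (insert a S)) * (1 - fps_X) ^ card S"
    using insert by (simp add: algebra_simps)
  also have "\<dots> = fps_X * (support_series S * (1 - fps_X) ^ card S)"
    by (simp only: support_series_insert[OF insert(1,2)] mult.assoc)
  finally show ?case using insert by simp
qed

lemma standard_monomials_iff:
  assumes "two_element_edges E"
  shows "m \<in> standard_monomials V E d \<longleftrightarrow> indep V E (set_mset m) \<and> size m = d"
proof -
  have "(\<exists>e\<in>E. \<exists>i j. e = {i, j} \<and> i \<noteq> j \<and> i \<in># m \<and> j \<in># m) \<longleftrightarrow> (\<exists>e\<in>E. e \<subseteq> set_mset m)"
  proof (rule bex_cong[OF refl])
    fix e assume "e \<in> E"
    then obtain i j where "e = {i, j}" "i \<noteq> j"
      using assms unfolding two_element_edges_def by blast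
    then show "(\<exists>i j. e = {i, j} \<and> i \<noteq> j \<and> i \<in># m \<and> j \<in># m) \<longleftrightarrow> e \<subseteq> set_mset m"
      by auto
  qed
  then show ?thesis
    unfolding standard_monomials_def mem_Collect_eq indep_def by auto
qed

lemma hilbert_fun_eq_sum:
  assumes "two_element_edges E" "finite V"
  shows "hilbert_fun V E d = (\<Sum>S\<in>indep_sets V E. card (msets_with_support S d))"
proof -
  have eq: "standard_monomials V E d = (\<Union>S\<in>indep_sets V E. msets_with_support S d)"
    by (auto simp: standard_monomials_iff[OF assms(1)] indep_sets_def msets_with_support_def)
  have "finite (msets_with_support S d)" if "S \<in> indep_sets V E" for S
    using that assms(2) by (auto intro: finite_msets_with_support finite_indep simp: indep_sets_def)
  then show ?thesis
    unfolding hilbert_fun_def eq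
    by (intro card_UN_disjoint) (auto simp: finite_indep_sets assms(2) msets_with_support_def)
qed

lemma hilbert_series_eq_sum:
  assumes "two_element_edges E" "finite V"
  shows "hilbert_series V E = (\<Sum>S\<in>indep_sets V E. support_series S)"
  by (rule fps_ext) (simp add: hilbert_series_def fps_sum_nth support_series_def hilbert_fun_eq_sum[OF assms])

lemma h_poly_eq_sum:
  assumes "two_element_edges E" "finite V"
  shows "h_poly V E = (\<Sum>S\<in>indep_sets V E. monom 1 (card S) * [:1, -1:] ^ (indep_num V E - card S))"
    (is "_ = ?h")
proof -
  have "hilbert_series V E * (1 - fps_X) ^ indep_num V E
      = (\<Sum>S\<in>indep_sets V E. fps_X ^ card S * (1 - fps_X) ^ (indep_num V E - card S))"
    unfolding hilbert_series_eq_sum[OF assms] sum_distrib_right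
  proof (rule sum.cong[OF refl])
    fix S assume "S \<in> indep_sets V E"
    then have "finite S" "card S \<le> indep_num V E"
      using assms(2) by (auto simp: indep_sets_def finite_indep card_le_indep_num)
    then have "(1 - fps_X :: int fps) ^ indep_num V E
        = (1 - fps_X) ^ card S * (1 - fps_X) ^ (indep_num V E - card S)"
      by (simp flip: power_add)
    then show "support_series S * (1 - fps_X) ^ indep_num V E
        = fps_X ^ card S * (1 - fps_X) ^ (indep_num V E - card S)"
      by (simp only: mult.assoc[symmetric] support_series_mult_power[OF \<open>finite S\<close>])
  qed
  also have "\<dots> = fps_of_poly ?h"
  proof -
    have "fps_of_poly [:1, -1:] = (1 - fps_X :: int fps)"
      by (simp add: fps_of_poly_pCons fps_const_neg)
    then show ?thesis
      by (simp only: fps_of_poly_sum fps_of_poly_mult fps_of_poly_power fps_of_poly_monom')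
  qed
  finally have "fps_of_poly ?h = hilbert_series V E * (1 - fps_X) ^ indep_num V E" ..
  then show ?thesis
    unfolding h_poly_def by (metis (mono_tags) the_equality fps_of_poly_eq_iff)
qed

lemma degree_h_poly_le:
  assumes "two_element_edges E" "finite V"
  shows "degree (h_poly V E) \<le> indep_num V E"
  unfolding h_poly_eq_sum[OF assms]
proof (rule degree_sum_le)
  fix S assume "S \<in> indep_sets V E"
  then have "card S \<le> indep_num V E"
    using assms(2) by (simp add: indep_sets_def card_le_indep_num)
  then show "degree (monom (1::int) (card S) * [:1, -1:] ^ (indep_num V E - card S)) \<le> indep_num V E"
    by (simp add: degree_mult_eq degree_monom_eq degree_power_eq)
qed (simp add: finite_indep_sets assms(2))

lemma coeff_h_poly_indep_num:
  assumes "two_element_edges E" "finite V"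
  shows "coeff (h_poly V E) (indep_num V E) = (-1) ^ indep_num V E * indep_poly_eval V E (-1)"
proof -
  have "coeff (monom 1 (card S) * [:1, -1:] ^ (indep_num V E - card S) :: int poly) (indep_num V E)
      = (-1) ^ indep_num V E * (-1) ^ card S" if "S \<in> indep_sets V E" for S
  proof -
    have le: "card S \<le> indep_num V E"
      using that assms(2) by (simp add: indep_sets_def card_le_indep_num)
    have "coeff (monom 1 (card S) * [:1, -1:] ^ (indep_num V E - card S) :: int poly) (indep_num V E)
        = lead_coeff ([:1, -1:] ^ (indep_num V E - card S) :: int poly)"
      using le by (simp add: coeff_monom_mult degree_power_eq)
    also have "\<dots> = (-1) ^ (indep_num V E - card S)"
      by (simp add: lead_coeff_power)
    also have "\<dots> = (-1) ^ indep_num V E * (-1) ^ card S"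
      using le by (auto simp: le_iff_add power_add)
    finally show ?thesis .
  qed
  then show ?thesis
    by (simp add: h_poly_eq_sum[OF assms] coeff_sum indep_poly_eval_def sum_distrib_left indep_sets_def)
qed

lemma a_inv_le_0:
  assumes "two_element_edges E" "finite V"
  shows "a_inv V E \<le> 0"
  using degree_h_poly_le[OF assms] by (simp add: a_inv_def)

lemma a_inv_eq_0_iff:
  assumes "two_element_edges E" "finite V" "indep_num V E > 0"
  shows "a_inv V E = 0 \<longleftrightarrow> indep_poly_eval V E (-1) \<noteq> 0"
proof -
  let ?h = "h_poly V E"
  have "degree ?h = indep_num V E \<longleftrightarrow> coeff ?h (indep_num V E) \<noteq> 0"
  proof
    assume deg: "degree ?h = indep_num V E"
    then have "?h \<noteq> 0" using assms(3) by auto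
    then show "coeff ?h (indep_num V E) \<noteq> 0" using deg by (metis leading_coeff_0_iff)
  next
    assume "coeff ?h (indep_num V E) \<noteq> 0"
    then show "degree ?h = indep_num V E"
      using le_degree degree_h_poly_le[OF assms(1,2)] by (metis le_antisym)
  qed
  then show ?thesis
    by (simp add: a_inv_def coeff_h_poly_indep_num[OF assms(1,2)])
qed

section \<open>Suspensions\<close>

lemma two_element_edges_suspE:
  "two_element_edges E \<Longrightarrow> z \<notin> C \<Longrightarrow> two_element_edges (suspE E C z)"
  by (auto simp: two_element_edges_def suspE_def)

lemma indep_suspension_iff:
  assumes "z \<notin> V" "C \<subseteq> V" "\<Union>E \<subseteq> V"
  shows "indep (suspV V z) (suspE E C z) S \<longleftrightarrow>
           (if z \<in> S then indep (V - C) E (S - {z}) else indep V E S)"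
proof -
  have "suspE E C z = E \<union> (\<lambda>c. {z, c}) ` C"
    by (auto simp: suspE_def)
  then have char: "indep (suspV V z) (suspE E C z) S \<longleftrightarrow>
      S \<subseteq> insert z V \<and> (\<forall>e\<in>E. \<not> e \<subseteq> S) \<and> (z \<in> S \<longrightarrow> C \<inter> S = {})"
    by (auto simp: indep_def suspV_def ball_Un)
  show ?thesis
  proof (cases "z \<in> S")
    case True
    have "S \<subseteq> insert z V \<and> C \<inter> S = {} \<longleftrightarrow> S - {z} \<subseteq> V - C"
      using True assms(1,2) by auto
    moreover have "(\<forall>e\<in>E. \<not> e \<subseteq> S) \<longleftrightarrow> (\<forall>e\<in>E. \<not> e \<subseteq> S - {z})"
      using assms(1,3) by auto
    ultimately show ?thesis
      using char True unfolding indep_def by argo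
  next
    case False
    then show ?thesis
      using char by (auto simp: indep_def)
  qed
qed

lemma indep_sets_suspension:
  assumes "z \<notin> V" "C \<subseteq> V" "\<Union>E \<subseteq> V"
  shows "indep_sets (suspV V z) (suspE E C z) = indep_sets V E \<union> insert z ` indep_sets (V - C) E"
proof (intro equalityI subsetI)
  fix S assume "S \<in> indep_sets (suspV V z) (suspE E C z)"
  then show "S \<in> indep_sets V E \<union> insert z ` indep_sets (V - C) E"
    using indep_suspension_iff[OF assms] unfolding indep_sets_def
    by (metis (mono_tags, lifting) UnI1 UnI2 image_eqI insert_Diff mem_Collect_eq)
next
  fix S assume "S \<in> indep_sets V E \<union> insert z ` indep_sets (V - C) E"
  moreover have "z \<notin> T" if "indep V' E T" "V' \<subseteq> V" for T V'
    using that assms(1) by (auto simp: indep_def)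
  ultimately show "S \<in> indep_sets (suspV V z) (suspE E C z)"
    using indep_suspension_iff[OF assms] unfolding indep_sets_def by fastforce
qed

lemma indep_poly_eval_suspension:
  assumes "finite V" "z \<notin> V" "C \<subseteq> V" "\<Union>E \<subseteq> V"
  shows "indep_poly_eval (suspV V z) (suspE E C z) x =
           indep_poly_eval V E x + x * indep_poly_eval (V - C) E x"
proof -
  let ?A = "indep_sets V E" and ?B = "indep_sets (V - C) E"
  have fin: "finite ?A" "finite ?B"
    using assms(1) by (simp_all add: finite_indep_sets)
  have disj: "?A \<inter> insert z ` ?B = {}" and inj: "inj_on (insert z) ?B"
    using assms(2) by (auto simp: indep_sets_def indep_def inj_on_def)
  have card_insert: "x ^ card (insert z T) = x * x ^ card T" if "T \<in> ?B" for T
  proof -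
    have "finite T" "z \<notin> T"
      using that assms(1,2) by (auto simp: indep_sets_def indep_def intro: finite_subset)
    then show ?thesis by simp
  qed
  have "indep_poly_eval (suspV V z) (suspE E C z) x
      = (\<Sum>T\<in>?A. x ^ card T) + (\<Sum>T\<in>insert z ` ?B. x ^ card T)"
    unfolding indep_poly_eval_def indep_sets_def[symmetric] indep_sets_suspension[OF assms(2-4)]
    using fin disj by (simp add: sum.union_disjoint)
  also have "(\<Sum>T\<in>insert z ` ?B. x ^ card T) = (\<Sum>T\<in>?B. x * x ^ card T)"
    by (subst sum.reindex[OF inj]) (simp add: card_insert)
  finally show ?thesis
    by (simp add: indep_poly_eval_def indep_sets_def sum_distrib_left)
qed

lemma indep_num_suspension:
  assumes "two_element_edges E" "finite V" "z \<notin> V" "C \<subseteq> V" "\<Union>E \<subseteq> V"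
  shows "indep_num (suspV V z) (suspE E C z) = max (indep_num V E) (indep_num (V - C) E + 1)"
proof -
  have fin: "finite (suspV V z)" "finite (V - C)"
    using assms(2) by (simp_all add: suspV_def)
  have indep_iff: "indep (suspV V z) (suspE E C z) S \<longleftrightarrow>
      indep V E S \<or> (\<exists>T. S = insert z T \<and> indep (V - C) E T)" for S
    using indep_sets_suspension[OF assms(3-5)] by (auto simp: indep_sets_def set_eq_iff)
  have card_insert: "card (insert z T) = card T + 1" if "indep (V - C) E T" for T
  proof -
    have "finite T" "z \<notin> T"
      using that assms(2,3) by (auto simp: indep_def intro: finite_subset)
    then show ?thesis by simp
  qed
  obtain S\<^sub>1 where S\<^sub>1: "indep V E S\<^sub>1" "card S\<^sub>1 = indep_num V E"
    using indep_num_attained[OF assms(1,2)] .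
  obtain S\<^sub>2 where S\<^sub>2: "indep (V - C) E S\<^sub>2" "card S\<^sub>2 = indep_num (V - C) E"
    using indep_num_attained[OF assms(1) fin(2)] .
  show ?thesis
  proof (rule indep_num_eqI[OF fin(1)])
    fix S assume "indep (suspV V z) (suspE E C z) S"
    then show "card S \<le> max (indep_num V E) (indep_num (V - C) E + 1)"
      using card_le_indep_num[OF assms(2)] card_le_indep_num[OF fin(2)] card_insert
      unfolding indep_iff by fastforce
  next
    show "indep (suspV V z) (suspE E C z) (if indep_num V E \<le> indep_num (V - C) E + 1 then insert z S\<^sub>2 else S\<^sub>1)"
      using S\<^sub>1 S\<^sub>2 indep_iff by auto
    show "card (if indep_num V E \<le> indep_num (V - C) E + 1 then insert z S\<^sub>2 else S\<^sub>1) =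
        max (indep_num V E) (indep_num (V - C) E + 1)"
      using S\<^sub>1 S\<^sub>2 card_insert by auto
  qed
qed

section \<open>Sets without two consecutive numbers\<close>

definition no_consec :: "nat set \<Rightarrow> bool" where
  "no_consec T \<longleftrightarrow> (\<forall>x\<in>T. Suc x \<notin> T)"

definition no_consec_subsets :: "nat set \<Rightarrow> nat set set" where
  "no_consec_subsets U = {T. T \<subseteq> U \<and> no_consec T}"

(* The independence polynomial of the subgraph induced on U by the path 0 - 1 - 2 - ... *)
definition path_indep_poly :: "nat set \<Rightarrow> 'a::comm_ring_1 \<Rightarrow> 'a" where
  "path_indep_poly U x = (\<Sum>T\<in>no_consec_subsets U. x ^ card T)"

lemma no_consec_subset: "no_consec T \<Longrightarrow> S \<subseteq> T \<Longrightarrow> no_consec S"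
  by (auto simp: no_consec_def)

lemma no_consec_insert:
  "no_consec (insert v T) \<longleftrightarrow> no_consec T \<and> Suc v \<notin> T \<and> (v = 0 \<or> v - 1 \<notin> T)"
  by (cases v) (auto simp: no_consec_def)

lemma finite_no_consec_subsets: "finite U \<Longrightarrow> finite (no_consec_subsets U)"
  by (rule finite_subset[of _ "Pow U"]) (auto simp: no_consec_subsets_def)

(* For v = 0 the truncated v - 1 is v itself, which is harmless. *)
lemma no_consec_subsets_split:
  assumes "v \<in> U"
  shows "no_consec_subsets U =
           no_consec_subsets (U - {v}) \<union> insert v ` no_consec_subsets (U - {v - 1, v, Suc v})"
proof (intro equalityI subsetI)
  fix T assume T: "T \<in> no_consec_subsets U"
  show "T \<in> no_consec_subsets (U - {v}) \<union> insert v ` no_consec_subsets (U - {v - 1, v, Suc v})"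
  proof (cases "v \<in> T")
    case True
    have "no_consec (insert v (T - {v}))" "no_consec (T - {v})"
      using T True no_consec_subset[of T "T - {v}"] by (auto simp: no_consec_subsets_def insert_absorb)
    then have "T - {v} \<in> no_consec_subsets (U - {v - 1, v, Suc v})"
      using T by (auto simp: no_consec_subsets_def no_consec_insert)
    then show ?thesis
      using True by (metis UnI2 image_eqI insert_Diff)
  next
    case False
    then show ?thesis
      using T by (auto simp: no_consec_subsets_def)
  qed
next
  fix T assume "T \<in> no_consec_subsets (U - {v}) \<union> insert v ` no_consec_subsets (U - {v - 1, v, Suc v})"
  then show "T \<in> no_consec_subsets U"
    using assms by (auto simp: no_consec_subsets_def no_consec_insert)
qed

lemma path_indep_poly_empty: "path_indep_poly {} x = 1"
proof -
  have "no_consec_subsets {} = {{}}"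
    by (auto simp: no_consec_subsets_def no_consec_def)
  then show ?thesis by (simp add: path_indep_poly_def)
qed

lemma path_indep_poly_remove:
  assumes "finite U" "v \<in> U"
  shows "path_indep_poly U x =
           path_indep_poly (U - {v}) x + x * path_indep_poly (U - {v - 1, v, Suc v}) x"
proof -
  let ?A = "no_consec_subsets (U - {v})" and ?B = "no_consec_subsets (U - {v - 1, v, Suc v})"
  have fin: "finite ?A" "finite ?B"
    using assms(1) by (simp_all add: finite_no_consec_subsets)
  have disj: "?A \<inter> insert v ` ?B = {}" and inj: "inj_on (insert v) ?B"
    by (auto simp: no_consec_subsets_def inj_on_def)
  have card_insert: "x ^ card (insert v T) = x * x ^ card T" if "T \<in> ?B" for T
    using that assms(1) by (auto simp: no_consec_subsets_def card_insert_if finite_subset)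
  have "path_indep_poly U x = (\<Sum>T\<in>?A. x ^ card T) + (\<Sum>T\<in>insert v ` ?B. x ^ card T)"
    unfolding path_indep_poly_def no_consec_subsets_split[OF assms(2)]
    using fin disj by (simp add: sum.union_disjoint)
  also have "(\<Sum>T\<in>insert v ` ?B. x ^ card T) = (\<Sum>T\<in>?B. x * x ^ card T)"
    by (subst sum.reindex[OF inj]) (simp add: card_insert)
  finally show ?thesis
    by (simp add: path_indep_poly_def sum_distrib_left)
qed

lemma path_indep_poly_isolated:
  assumes "finite U" "v \<in> U" "v - 1 \<notin> U" "Suc v \<notin> U"
  shows "path_indep_poly U x = (1 + x) * path_indep_poly (U - {v}) x"
proof -
  have "U - {v - 1, v, Suc v} = U - {v}"
    using assms(3,4) by auto
  then show ?thesis
    using path_indep_poly_remove[OF assms(1,2)] by (simp add: distrib_right)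
qed

lemma path_indep_poly_interval_Suc_Suc:
  "path_indep_poly {1..Suc (Suc n)} x = path_indep_poly {1..Suc n} x + x * path_indep_poly {1..n} x"
proof -
  have "{1..Suc (Suc n)} - {Suc (Suc n)} = {1..Suc n}"
       "{1..Suc (Suc n)} - {Suc (Suc n) - 1, Suc (Suc n), Suc (Suc (Suc n))} = {1..n}"
    by auto
  then show ?thesis
    using path_indep_poly_remove[of "{1..Suc (Suc n)}" "Suc (Suc n)" x] by simp
qed

lemma path_indep_poly_interval_minus_one:
  "path_indep_poly {1..3 * j} (-1 :: 'a::comm_ring_1) = (-1) ^ j \<and>
   path_indep_poly {1..3 * j + 1} (-1 :: 'a) = 0 \<and>
   path_indep_poly {1..3 * j + 2} (-1 :: 'a) = - ((-1) ^ j)"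
proof (induction j)
  case 0
  have "path_indep_poly {1..1} (-1 :: 'a) = 0"
    using path_indep_poly_isolated[of "{1..1}" 1 "-1 :: 'a"] by simp
  moreover have "path_indep_poly {1..0} (-1 :: 'a) = 1"
    by (simp add: path_indep_poly_empty)
  ultimately show ?case
    using path_indep_poly_interval_Suc_Suc[of 0 "-1 :: 'a"] by (simp add: numeral_2_eq_2)
next
  case (Suc j)
  then show ?case
    using path_indep_poly_interval_Suc_Suc[of "3 * j + 1" "-1 :: 'a"]
      path_indep_poly_interval_Suc_Suc[of "3 * j + 2" "-1 :: 'a"]
      path_indep_poly_interval_Suc_Suc[of "3 * j + 3" "-1 :: 'a"]
    by (simp add: numeral_3_eq_3)
qed

lemma path_indep_poly_interval_eq_0_iff:
  "path_indep_poly {1..n} (-1 :: 'a::comm_ring_1) = 0 \<longleftrightarrow> n mod 3 = 1"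
proof -
  note closed_form = path_indep_poly_interval_minus_one[of "n div 3", where 'a = 'a]
  have n: "3 * (n div 3) + n mod 3 = n" by (rule mult_div_mod_eq)
  have sign: "(-1 :: 'a) ^ (n div 3) \<noteq> 0"
    by (metis minus_one_mult_self mult_zero_left zero_neq_one)
  have "n mod 3 = 0 \<or> n mod 3 = 1 \<or> n mod 3 = 2" by auto
  then show ?thesis
  proof (elim disjE)
    assume "n mod 3 = 0"
    then have "path_indep_poly {1..n} (-1 :: 'a) = (-1) ^ (n div 3)"
      using closed_form n by simp
    then show ?thesis using \<open>n mod 3 = 0\<close> sign by simp
  next
    assume "n mod 3 = 1"
    then show ?thesis using closed_form n by auto
  next
    assume "n mod 3 = 2"
    then have "path_indep_poly {1..n} (-1 :: 'a) = - ((-1) ^ (n div 3))"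
      using closed_form n by auto
    then show ?thesis using \<open>n mod 3 = 2\<close> sign by simp
  qed
qed

definition dominoes :: "nat \<Rightarrow> nat set" where
  "dominoes k = (\<Union>i<k. {3 * i + 2, 3 * i + 3})"

lemma path_indep_poly_dominoes: "path_indep_poly (dominoes k) (-1 :: 'a::comm_ring_1) = (-1) ^ k"
proof (induction k)
  case 0
  then show ?case by (simp add: dominoes_def path_indep_poly_empty)
next
  case (Suc k)
  have fin: "finite (dominoes j)" for j by (simp add: dominoes_def)
  have le: "x \<le> 3 * k" if "x \<in> dominoes k" for x
    using that by (auto simp: dominoes_def)
  have "dominoes (Suc k) - {3 * k + 3} = insert (3 * k + 2) (dominoes k)"
    using le by (auto simp: dominoes_def lessThan_Suc)
  moreover have "dominoes (Suc k) - {3 * k + 3 - 1, 3 * k + 3, Suc (3 * k + 3)} = dominoes k"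
    using le by (auto simp: dominoes_def lessThan_Suc)
  moreover have "path_indep_poly (insert (3 * k + 2) (dominoes k)) (-1 :: 'a) = 0"
    using path_indep_poly_isolated[of "insert (3 * k + 2) (dominoes k)" "3 * k + 2" "-1 :: 'a"] fin le
    by force
  ultimately show ?case
    using path_indep_poly_remove[of "dominoes (Suc k)" "3 * k + 3" "-1 :: 'a"] Suc.IH fin
    by (simp add: dominoes_def)
qed

section \<open>Maximal independent sets of paths\<close>

lemma indep_pathE_iff:
  assumes "U \<subseteq> {1..n}"
  shows "indep U (pathE n) T \<longleftrightarrow> T \<subseteq> U \<and> no_consec T"
proof (cases "T \<subseteq> U")
  case True
  have "(\<exists>e\<in>pathE n. e \<subseteq> T) \<longleftrightarrow> (\<exists>x\<in>T. Suc x \<in> T)"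
  proof
    assume "\<exists>e\<in>pathE n. e \<subseteq> T"
    then obtain e where "e \<in> pathE n" "e \<subseteq> T" by blast
    moreover from \<open>e \<in> pathE n\<close> obtain i where "e = {i, Suc i}"
      unfolding pathE_def by blast
    ultimately show "\<exists>x\<in>T. Suc x \<in> T" by auto
  next
    assume "\<exists>x\<in>T. Suc x \<in> T"
    then obtain x where x: "x \<in> T" "Suc x \<in> T" by blast
    then have "x \<in> {1..n}" "Suc x \<in> {1..n}"
      using True assms by blast+
    then have "{x, Suc x} \<in> pathE n"
      unfolding pathE_def by (intro CollectI exI[of _ x]) simp
    then show "\<exists>e\<in>pathE n. e \<subseteq> T"
      using x by (intro bexI[of _ "{x, Suc x}"]) simp_all
  qed
  then show ?thesis
    using True unfolding indep_def no_consec_def by blast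
next
  case False
  then show ?thesis by (simp add: indep_def)
qed

lemma indep_sets_pathE: "U \<subseteq> {1..n} \<Longrightarrow> indep_sets U (pathE n) = no_consec_subsets U"
  by (simp add: indep_sets_def no_consec_subsets_def indep_pathE_iff)

lemma indep_poly_eval_pathE:
  "U \<subseteq> {1..n} \<Longrightarrow> indep_poly_eval U (pathE n) x = path_indep_poly U x"
  by (simp add: indep_poly_eval_def path_indep_poly_def indep_sets_pathE flip: indep_sets_def)

lemma two_element_edges_pathE: "two_element_edges (pathE n)"
  unfolding two_element_edges_def pathE_def
proof
  fix e assume "e \<in> {{i, Suc i} |i. 1 \<le> i \<and> i < n}"
  then obtain i where "e = {i, Suc i}" by blast
  then show "\<exists>i j. e = {i, j} \<and> i \<noteq> j" by (intro exI[of _ i] exI[of _ "Suc i"]) simp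
qed

lemma Union_pathE_subset: "\<Union>(pathE n) \<subseteq> pathV n"
  by (auto simp: pathE_def pathV_def)

lemma maximal_indep_pathD:
  assumes "maximal_indep (pathV n) (pathE n) C"
  shows "C \<subseteq> {1..n}" "no_consec C" "\<And>v. v \<in> {1..n} \<Longrightarrow> v \<notin> C \<Longrightarrow> v - 1 \<in> C \<or> Suc v \<in> C"
proof -
  have indep: "indep (pathV n) (pathE n) C"
    using assms by (simp add: maximal_indep_def)
  then show sub: "C \<subseteq> {1..n}" and nc: "no_consec C"
    by (simp_all add: indep_pathE_iff pathV_def)
  fix v assume v: "v \<in> {1..n}" "v \<notin> C"
  then have "\<not> no_consec (insert v C)"
    using assms sub by (auto simp: maximal_indep_def pathV_def indep_pathE_iff)
  then show "v - 1 \<in> C \<or> Suc v \<in> C"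
    using nc by (cases v) (auto simp: no_consec_insert)
qed

lemma indep_num_path: "indep_num (pathV n) (pathE n) = (n + 1) div 2"
proof (rule indep_num_eqI)
  fix T assume "indep (pathV n) (pathE n) T"
  then have T: "T \<subseteq> {1..n}" "no_consec T"
    by (simp_all add: indep_pathE_iff pathV_def)
  have "inj_on (\<lambda>t. (t + 1) div 2) T"
  proof (rule inj_onI)
    fix x y assume "x \<in> T" "y \<in> T" "(x + 1) div 2 = (y + 1) div 2"
    moreover have "y \<noteq> Suc x" "x \<noteq> Suc y"
      using calculation T(2) by (auto simp: no_consec_def)
    ultimately show "x = y" by presburger
  qed
  moreover have "(t + 1) div 2 \<in> {1..(n + 1) div 2}" if "t \<in> T" for t
  proof -
    have "1 \<le> t" "t \<le> n" using that T(1) by auto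
    then show ?thesis by (simp add: div_le_mono)
  qed
  then have "(\<lambda>t. (t + 1) div 2) ` T \<subseteq> {1..(n + 1) div 2}" by blast
  ultimately show "card T \<le> (n + 1) div 2"
    using card_inj_on_le[of _ T "{1..(n + 1) div 2}"] by simp
next
  let ?odd = "(\<lambda>i. 2 * i + 1) ` {..<(n + 1) div 2}"
  show "indep (pathV n) (pathE n) ?odd"
    by (auto simp: indep_pathE_iff pathV_def no_consec_def) presburger
  show "card ?odd = (n + 1) div 2"
    by (simp add: card_image inj_on_def)
qed (simp add: pathV_def)

lemma card_no_consec_complement_le:
  assumes C: "C \<subseteq> {1..n}" "\<And>v. v \<in> {1..n} \<Longrightarrow> v \<notin> C \<Longrightarrow> v - 1 \<in> C \<or> Suc v \<in> C"
    and T: "T \<subseteq> {1..n} - C" "no_consec T"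
  shows "card T \<le> card (C - {1}) + (if n \<in> C then 0 else 1)"
proof -
  \<comment> \<open>\<open>t\<close> goes to the next element of \<open>C\<close>, which is \<open>t + 1\<close> or, by maximality, \<open>t + 2\<close>; or to \<open>n + 1\<close>
    if \<open>t = n\<close>. Elements of \<open>T\<close> are at distance at least 2, so their images differ.\<close>
  define \<psi> where "\<psi> t = (if Suc t \<in> C \<or> t = n then Suc t else Suc (Suc t))" for t
  define W where "W = (C - {1}) \<union> (if n \<in> C then {} else {Suc n})"
  have "inj_on \<psi> T"
  proof (rule inj_onI)
    fix x y assume "x \<in> T" "y \<in> T" "\<psi> x = \<psi> y"
    moreover have "y \<noteq> Suc x" "x \<noteq> Suc y"
      using calculation T(2) by (auto simp: no_consec_def)
    ultimately show "x = y"
      by (auto simp: \<psi>_def split: if_splits)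
  qed
  moreover have "\<psi> t \<in> W" if "t \<in> T" for t
  proof -
    have t: "1 \<le> t" "t \<le> n" "t \<notin> C"
      using that T(1) by auto
    show ?thesis
    proof (cases "Suc t \<in> C \<or> t = n")
      case True
      then show ?thesis using t by (auto simp: \<psi>_def W_def)
    next
      case False
      then have "Suc (Suc t) \<in> C"
        using C(2)[of "Suc t"] t by auto
      then show ?thesis using False by (simp add: \<psi>_def W_def)
    qed
  qed
  moreover have "finite W"
    using C(1) by (auto simp: W_def intro: finite_subset)
  ultimately have "card T \<le> card W"
    by (intro card_inj_on_le) auto
  also have "card W = card (C - {1}) + (if n \<in> C then 0 else 1)"
    unfolding W_def using C(1) by (subst card_Un_disjoint) (auto intro: finite_subset)
  finally show ?thesis .
qed

lemma no_consec_complement_attains: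
  assumes C: "C \<subseteq> {1..n}" "no_consec C" and "1 \<le> n"
  obtains T where "T \<subseteq> {1..n} - C" "no_consec T"
    "card T = card (C - {1}) + (if n \<in> C then 0 else 1)"
proof
  define P where "P = {t. 1 \<le> t \<and> Suc t \<in> C}"
  have "P \<subseteq> {1..n} - C"
    using C by (auto simp: P_def no_consec_def)
  moreover have "{n} - C \<subseteq> {1..n} - C"
    using assms(3) by auto
  ultimately show sub: "P \<union> ({n} - C) \<subseteq> {1..n} - C" by blast
  show "no_consec (P \<union> ({n} - C))"
    unfolding no_consec_def
  proof (intro ballI notI)
    fix t assume "t \<in> P \<union> ({n} - C)" "Suc t \<in> P \<union> ({n} - C)"
    moreover have "Suc t \<notin> C" "Suc t \<le> n"
      using calculation(2) sub by auto
    ultimately show False by (auto simp: P_def)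
  qed
  have "Suc ` P = C - {1}"
  proof (intro equalityI subsetI)
    fix c assume "c \<in> C - {1}"
    moreover have "c \<ge> 2"
      using calculation C(1) by force
    moreover have "c = Suc (c - 1)" "1 \<le> c - 1"
      using calculation by auto
    ultimately show "c \<in> Suc ` P"
      unfolding P_def by (metis (mono_tags, lifting) DiffD1 image_eqI mem_Collect_eq)
  qed (auto simp: P_def)
  then have "card P = card (C - {1})"
    by (metis card_image inj_Suc inj_on_subset subset_UNIV)
  moreover have "finite P" "n \<notin> P"
    using sub C(1) by (auto simp: P_def intro: finite_subset)
  moreover have "{n} - C = (if n \<in> C then {} else {n})"
    by auto
  ultimately show "card (P \<union> ({n} - C)) = card (C - {1}) + (if n \<in> C then 0 else 1)"
    by (subst card_Un_disjoint) auto
qed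

lemma indep_num_path_minus_maximal:
  assumes "maximal_indep (pathV n) (pathE n) C" "1 \<le> n"
  shows "indep_num (pathV n - C) (pathE n) = card (C - {1}) + (if n \<in> C then 0 else 1)"
proof -
  note C = maximal_indep_pathD[OF assms(1)]
  have indep_iff: "indep ({1..n} - C) (pathE n) S \<longleftrightarrow> S \<subseteq> {1..n} - C \<and> no_consec S" for S
    by (rule indep_pathE_iff) auto
  obtain T where T: "T \<subseteq> {1..n} - C" "no_consec T"
    "card T = card (C - {1}) + (if n \<in> C then 0 else 1)"
    using no_consec_complement_attains[OF C(1,2) assms(2)] .
  show ?thesis
    unfolding pathV_def
  proof (rule indep_num_eqI)
    show "indep ({1..n} - C) (pathE n) T"
      using T indep_iff by blast
  qed (use T indep_iff card_no_consec_complement_le[OF C(1,3)] in auto)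
qed

(* Maximality puts 1 into C, and then each element of C is followed by two non-elements (the first
   must not be isolated in the complement) and another element (the second must be dominated). *)
lemma maximal_indep_path_without_isolated_mem_iff:
  assumes "maximal_indep (pathV n) (pathE n) C" "2 \<le> n"
    and no_isolated: "\<And>v. v \<in> {1..n} - C \<Longrightarrow> v - 1 \<in> {1..n} - C \<or> Suc v \<in> {1..n} - C"
    and "1 \<le> v" "v \<le> n"
  shows "v \<in> C \<longleftrightarrow> v mod 3 = 1"
  using assms(4,5)
proof (induction v rule: less_induct)
  case (less v)
  note C = maximal_indep_pathD[OF assms(1)]
  show ?case
  proof (cases "v = 1")
    case True
    have "1 \<in> C"
    proof (rule ccontr)
      assume "1 \<notin> C"
      then have "2 \<notin> C" "2 \<in> C"
        using no_isolated[of 1] C(1) C(3)[of 1] assms(2) by auto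
      then show False by simp
    qed
    then show ?thesis using True by simp
  next
    case False
    define w where "w = v - 2"
    have w: "v = w + 2" "w + 1 \<in> {1..n}"
      using False less.prems by (auto simp: w_def)
    then have ih: "w + 1 \<in> C \<longleftrightarrow> (w + 1) mod 3 = 1" "1 \<le> w \<Longrightarrow> w \<in> C \<longleftrightarrow> w mod 3 = 1"
      using less.IH[of "w + 1"] less.IH[of w] less.prems by auto
    have nc: "Suc (w + 1) \<notin> C" if "w + 1 \<in> C"
      using C(2) that by (simp add: no_consec_def)
    consider "w mod 3 = 0" | "w mod 3 = 1" | "w mod 3 = 2" by arith
    then show ?thesis
    proof cases
      case 1
      then have "(w + 1) mod 3 = 1" "(w + 2) mod 3 = 2" by presburger+
      then show ?thesis
        using nc ih w by simp
    next
      case 2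
      then have "(w + 1) mod 3 = 2" "(w + 2) mod 3 = 0" "1 \<le> w" by presburger+
      then show ?thesis
        using no_isolated[of "w + 1"] ih w 2 by auto
    next
      case 3
      then have "(w + 1) mod 3 = 0" "(w + 2) mod 3 = 1" "1 \<le> w" by presburger+
      then show ?thesis
        using C(3)[of "w + 1"] ih w 3 by auto
    qed
  qed
qed

lemma maximal_indep_path_without_isolated:
  assumes "maximal_indep (pathV n) (pathE n) C" "2 \<le> n"
    and no_isolated: "\<And>v. v \<in> {1..n} - C \<Longrightarrow> v - 1 \<in> {1..n} - C \<or> Suc v \<in> {1..n} - C"
  shows "n mod 3 = 1 \<and> C = {3 * i + 1 | i. i \<le> n div 3}"
proof -
  note C = maximal_indep_pathD[OF assms(1)]
  note mem_iff = maximal_indep_path_without_isolated_mem_iff[OF assms]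
  have "n mod 3 = 1"
  proof (rule ccontr)
    define m where "m = n - 1"
    have m: "n = m + 1" "m \<in> {1..n}" "n \<in> {1..n}"
      using assms(2) by (auto simp: m_def)
    assume "n mod 3 \<noteq> 1"
    then have "n mod 3 = 0 \<and> m mod 3 = 2 \<or> n mod 3 = 2 \<and> m mod 3 = 1"
      unfolding m(1) by presburger
    then show False
    proof (elim disjE conjE)
      assume "n mod 3 = 0" "m mod 3 = 2"
      then show False
        using C(1) C(3)[of n] mem_iff[of n] mem_iff[of m] m by auto
    next
      assume "n mod 3 = 2" "m mod 3 = 1"
      then show False
        using no_isolated[of n] mem_iff[of n] mem_iff[of m] m by auto
    qed
  qed
  moreover have "C = {3 * i + 1 | i. i \<le> n div 3}"
  proof (intro equalityI subsetI)
    fix x assume "x \<in> C"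
    then have "1 \<le> x" "x \<le> n" "x mod 3 = 1"
      using mem_iff C(1) by auto
    then have "x = 3 * (x div 3) + 1" "x div 3 \<le> n div 3"
      using mult_div_mod_eq[of 3 x] by (simp_all add: div_le_mono)
    then show "x \<in> {3 * i + 1 | i. i \<le> n div 3}" by blast
  next
    fix x assume "x \<in> {3 * i + 1 | i. i \<le> n div 3}"
    then obtain i where i: "x = 3 * i + 1" "i \<le> n div 3" by blast
    have "3 * (n div 3) + 1 = n"
      using \<open>n mod 3 = 1\<close> mult_div_mod_eq[of 3 n] by simp
    then have "x \<le> n" "x mod 3 = 1"
      using i by auto
    then show "x \<in> C"
      using mem_iff[of x] i(1) by simp
  qed
  ultimately show ?thesis ..
qed

lemma interval_diff_thirds: "{1..3 * k + 1} - {3 * i + 1 | i. i \<le> k} = dominoes k"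
proof (rule set_eqI)
  fix x
  have "x \<in> {1..3 * k + 1} - {3 * i + 1 | i. i \<le> k} \<longleftrightarrow>
      1 \<le> x \<and> x \<le> 3 * k + 1 \<and> \<not> (\<exists>i\<le>k. x = 3 * i + 1)"
    by auto
  also have "\<dots> \<longleftrightarrow> (\<exists>i<k. x = 3 * i + 2 \<or> x = 3 * i + 3)"
    by presburger
  also have "\<dots> \<longleftrightarrow> x \<in> dominoes k"
    by (auto simp: dominoes_def)
  finally show "x \<in> {1..3 * k + 1} - {3 * i + 1 | i. i \<le> k} \<longleftrightarrow> x \<in> dominoes k" .
qed

lemma card_thirds: "card {3 * i + 1 | i. i \<le> k} = k + 1"
proof -
  have "{3 * i + 1 | i. i \<le> k} = (\<lambda>i. 3 * i + 1) ` {..k}"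
    by auto
  then show ?thesis
    by (simp add: card_image inj_on_def)
qed

lemma path_indep_poly_complement_minus_one:
  assumes "maximal_indep (pathV n) (pathE n) C" "2 \<le> n"
  shows "path_indep_poly ({1..n} - C) (-1 :: 'a::comm_ring_1) =
           (if n mod 3 = 1 \<and> C = {3 * i + 1 | i. i \<le> n div 3} then (-1) ^ (n div 3) else 0)"
proof (cases "\<exists>v\<in>{1..n} - C. v - 1 \<notin> {1..n} - C \<and> Suc v \<notin> {1..n} - C")
  case True
  then obtain v where "v \<in> {1..n} - C" "v - 1 \<notin> {1..n} - C" "Suc v \<notin> {1..n} - C"
    by blast
  then have "path_indep_poly ({1..n} - C) (-1 :: 'a) = 0"
    using path_indep_poly_isolated[of "{1..n} - C" v "-1 :: 'a"] by simp
  moreover have "\<not> (n mod 3 = 1 \<and> C = {3 * i + 1 | i. i \<le> n div 3})"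
  proof
    assume "n mod 3 = 1 \<and> C = {3 * i + 1 | i. i \<le> n div 3}"
    then have "{1..n} - C = dominoes (n div 3)"
      using interval_diff_thirds[of "n div 3"] mult_div_mod_eq[of 3 n] by simp
    then show False
      using \<open>v \<in> {1..n} - C\<close> \<open>v - 1 \<notin> {1..n} - C\<close> \<open>Suc v \<notin> {1..n} - C\<close>
      by (auto simp: dominoes_def)
  qed
  ultimately show ?thesis by auto
next
  case False
  then have thirds: "n mod 3 = 1 \<and> C = {3 * i + 1 | i. i \<le> n div 3}"
    using maximal_indep_path_without_isolated[OF assms] by blast
  then have "{1..n} - C = dominoes (n div 3)"
    using interval_diff_thirds[of "n div 3"] mult_div_mod_eq[of 3 n] by simp
  then show ?thesis
    using thirds path_indep_poly_dominoes[of "n div 3"] by simp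
qed

section \<open>The suspended path\<close>

lemma indep_poly_eval_path_suspension:
  assumes "C \<subseteq> {1..n}"
  shows "indep_poly_eval (suspV (pathV n) 0) (suspE (pathE n) C 0) x =
           path_indep_poly {1..n} x + x * path_indep_poly ({1..n} - C) x"
proof -
  have "indep_poly_eval (suspV (pathV n) 0) (suspE (pathE n) C 0) x =
      indep_poly_eval (pathV n) (pathE n) x + x * indep_poly_eval (pathV n - C) (pathE n) x"
    using assms Union_pathE_subset by (intro indep_poly_eval_suspension) (auto simp: pathV_def)
  then show ?thesis
    by (simp add: pathV_def indep_poly_eval_pathE)
qed

lemma indep_poly_eval_path_suspension_minus_one:
  assumes "maximal_indep (pathV n) (pathE n) C" "2 \<le> n"
  shows "indep_poly_eval (suspV (pathV n) 0) (suspE (pathE n) C 0) (-1) = path_indep_poly {1..n} (-1) -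
           (if n mod 3 = 1 \<and> C = {3 * i + 1 | i. i \<le> n div 3} then (-1) ^ (n div 3) else 0)"
  using indep_poly_eval_path_suspension[OF maximal_indep_pathD(1)[OF assms(1)]]
    path_indep_poly_complement_minus_one[OF assms]
  by simp

lemma indep_num_path_suspension:
  assumes "maximal_indep (pathV n) (pathE n) C" "1 \<le> n"
  shows "indep_num (suspV (pathV n) 0) (suspE (pathE n) C 0) =
           max ((n + 1) div 2) (card C + (if 1 \<in> C then 0 else 1) + (if n \<in> C then 0 else 1))"
proof -
  note C = maximal_indep_pathD[OF assms(1)]
  have "finite C"
    using C(1) finite_subset by blast
  have "card (C - {1}) + 1 = card C + (if 1 \<in> C then 0 else 1)"
  proof (cases "1 \<in> C")
    case True
    then have "card C > 0"
      using \<open>finite C\<close> card_gt_0_iff by blast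
    then show ?thesis using True by simp
  qed simp
  moreover have "indep_num (suspV (pathV n) 0) (suspE (pathE n) C 0) =
      max (indep_num (pathV n) (pathE n)) (indep_num (pathV n - C) (pathE n) + 1)"
    using C(1) two_element_edges_pathE Union_pathE_subset
    by (intro indep_num_suspension) (auto simp: pathV_def)
  ultimately show ?thesis
    by (simp add: indep_num_path indep_num_path_minus_maximal[OF assms])
qed

theorem theorem7p3:
  fixes n :: nat and C :: "nat set"
  assumes hn: "n \<ge> 2"
    and hC: "maximal_indep (pathV n) (pathE n) C"
  defines "GV \<equiv> suspV (pathV n) 0"
    and "GE \<equiv> suspE (pathE n) C 0"
    and "c \<equiv> card C"
    and "\<alpha> \<equiv> (n + 1) div 2"
    and "b \<equiv> (-1) ^ ((n + 1) div 2) * indep_poly_eval (pathV n) (pathE n) (-1)"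
    and "\<delta> \<equiv> (if 1 \<in> C then 0 else 1) + (if n \<in> C then 0 else (1::nat))"
  shows
    "(n mod 3 \<in> {0, 2} \<longrightarrow>
        a_inv GV GE = 0 \<and>
        (c + \<delta> = \<alpha> + 1 \<longrightarrow> coeff (h_poly GV GE) (indep_num GV GE) = - b) \<and>
        (c + \<delta> \<le> \<alpha> \<longrightarrow> coeff (h_poly GV GE) (indep_num GV GE) = b))
   \<and> (\<forall>k. n = 3 * k + 1 \<and> C = {3 * i + 1 | i. i \<le> k} \<longrightarrow>
        a_inv GV GE = 0 \<and>
        coeff (h_poly GV GE) (indep_num GV GE) = (-1) ^ (\<alpha> + k + 1))
   \<and> (n mod 3 = 1 \<and> C \<noteq> {3 * i + 1 | i. i \<le> n div 3} \<longrightarrow> a_inv GV GE < 0)"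
proof -
  note C = maximal_indep_pathD[OF hC]
  have edges: "two_element_edges GE" and fin: "finite GV"
    unfolding GE_def GV_def using C(1)
    by (auto intro!: two_element_edges_suspE two_element_edges_pathE simp: suspV_def pathV_def)
  have alpha: "indep_num GV GE = max \<alpha> (c + \<delta>)"
    using indep_num_path_suspension[OF hC] hn by (simp add: GV_def GE_def \<alpha>_def c_def \<delta>_def)
  then have a_inv: "a_inv GV GE = 0 \<longleftrightarrow> indep_poly_eval GV GE (-1) \<noteq> 0" "a_inv GV GE \<le> 0"
    using a_inv_eq_0_iff[OF edges fin] a_inv_le_0[OF edges fin] hn by (auto simp: \<alpha>_def)
  note coeff = coeff_h_poly_indep_num[OF edges fin]
  have b: "b = (-1) ^ \<alpha> * path_indep_poly {1..n} (-1)"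
    by (simp add: b_def \<alpha>_def indep_poly_eval_pathE pathV_def)
  have P_G: "indep_poly_eval GV GE (-1) = path_indep_poly {1..n} (-1) -
      (if n mod 3 = 1 \<and> C = {3 * i + 1 | i. i \<le> n div 3} then (-1) ^ (n div 3) else 0)"
    unfolding GV_def GE_def by (rule indep_poly_eval_path_suspension_minus_one[OF hC hn])
  have Q_n: "path_indep_poly {1..n} (-1 :: int) = 0 \<longleftrightarrow> n mod 3 = 1"
    by (rule path_indep_poly_interval_eq_0_iff)
  have part_a: "a_inv GV GE = 0 \<and>
      (c + \<delta> = \<alpha> + 1 \<longrightarrow> coeff (h_poly GV GE) (indep_num GV GE) = - b) \<and>
      (c + \<delta> \<le> \<alpha> \<longrightarrow> coeff (h_poly GV GE) (indep_num GV GE) = b)" if "n mod 3 \<in> {0, 2}"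
  proof -
    have "indep_poly_eval GV GE (-1) = path_indep_poly {1..n} (-1)" "path_indep_poly {1..n} (-1 :: int) \<noteq> 0"
      using P_G Q_n that by auto
    then show ?thesis
      using a_inv alpha coeff b by (auto simp: max_def)
  qed
  have part_b: "a_inv GV GE = 0 \<and> coeff (h_poly GV GE) (indep_num GV GE) = (-1) ^ (\<alpha> + k + 1)"
    if k: "n = 3 * k + 1" "C = {3 * i + 1 | i. i \<le> k}" for k
  proof -
    have "c = k + 1" "1 \<in> C" "n \<in> C"
      unfolding c_def k(2) card_thirds k(1) by auto
    then have "c + \<delta> \<le> \<alpha>"
      unfolding \<delta>_def \<alpha>_def k(1) by presburger
    moreover have "n div 3 = k"
      using k(1) by simp
    then have "indep_poly_eval GV GE (-1) = - ((-1) ^ k)"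
      using P_G Q_n k by simp
    ultimately show ?thesis
      using a_inv alpha coeff by (simp add: power_add)
  qed
  have part_c: "a_inv GV GE < 0" if "n mod 3 = 1" "C \<noteq> {3 * i + 1 | i. i \<le> n div 3}"
    using P_G Q_n that a_inv by simp
  show ?thesis
    using part_a part_b part_c by blast
qed

end
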